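(* Let $\mathcal{V}_t$ be a variety of $\Omega$-algebras satisfying $t(x,y)=x$ for some $t\in T_2$, and let $\mathcal{W}$ be any variety of $\Omega$-algebras. Then the relative Mal'tsev product $\mathcal{V}_t\circ_{\mathcal{W}}\mathcal{S}$ is a variety.
   Context: $\Omega$-algebras are of a plural similarity type (no nullary operation symbols, at least one operation symbol of arity $\ge2$). $T_2$ is the set of binary $\Omega$-terms in $x_1,x_2$ in which both variables occur. An identity is regular if the same variables occur on both sides; $\mathcal{S}$ is the variety of $\Omega$-algebras satisfying all regular identities. The relative Mal'tsev product $\mathcal{V}\circ_{\mathcal{W}}\mathcal{S}$ is the class of all $A\in\mathcal{W}$ having a congruence $\theta$ with $A/\theta\in\mathcal{S}$ and every $\theta$-class (a subalgebra) in $\mathcal{V}$; equivalently $\mathcal{W}\cap(\mathcal{V}\circ\mathcal{S})$. *)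

theory Defs
  imports Main "HOL-Library.FuncSet"
begin

definition plural :: "('f \<Rightarrow> nat) \<Rightarrow> bool" where
  "plural ar \<longleftrightarrow> (\<forall>f. ar f \<ge> 1) \<and> (\<exists>f. ar f \<ge> 2)"

datatype ('f, 'v) trm = Var 'v | App 'f "('f, 'v) trm list"

fun wf_trm :: "('f \<Rightarrow> nat) \<Rightarrow> ('f, 'v) trm \<Rightarrow> bool" where
  "wf_trm ar (Var v) = True"
| "wf_trm ar (App f ts) = (length ts = ar f \<and> (\<forall>t\<in>set ts. wf_trm ar t))"

fun vars :: "('f, 'v) trm \<Rightarrow> 'v set" where
  "vars (Var v) = {v}"
| "vars (App f ts) = (\<Union>t\<in>set ts. vars t)"

record ('f, 'a) alg =
  car :: "'a set"
  opr :: "'f \<Rightarrow> 'a list \<Rightarrow> 'a"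

definition is_alg :: "('f \<Rightarrow> nat) \<Rightarrow> ('f, 'a) alg \<Rightarrow> bool" where
  "is_alg ar A \<longleftrightarrow> car A \<noteq> {} \<and>
     (\<forall>f xs. length xs = ar f \<and> set xs \<subseteq> car A \<longrightarrow> opr A f xs \<in> car A)"

fun eval :: "('f, 'a) alg \<Rightarrow> ('v \<Rightarrow> 'a) \<Rightarrow> ('f, 'v) trm \<Rightarrow> 'a" where
  "eval A \<rho> (Var v) = \<rho> v"
| "eval A \<rho> (App f ts) = opr A f (map (eval A \<rho>) ts)"

type_synonym 'f idt = "('f, nat) trm \<times> ('f, nat) trm"

definition sat :: "('f, 'a) alg \<Rightarrow> 'f idt \<Rightarrow> bool" where
  "sat A e \<longleftrightarrow> (\<forall>\<rho>. (\<forall>v. \<rho> v \<in> car A) \<longrightarrow> eval A \<rho> (fst e) = eval A \<rho> (snd e))"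

definition wf_idt :: "('f \<Rightarrow> nat) \<Rightarrow> 'f idt \<Rightarrow> bool" where
  "wf_idt ar e \<longleftrightarrow> wf_trm ar (fst e) \<and> wf_trm ar (snd e)"

definition Mod :: "('f \<Rightarrow> nat) \<Rightarrow> 'f idt set \<Rightarrow> ('f, 'a) alg \<Rightarrow> bool" where
  "Mod ar \<Sigma> A \<longleftrightarrow> is_alg ar A \<and> (\<forall>e\<in>\<Sigma>. sat A e)"

definition regular_idts :: "('f \<Rightarrow> nat) \<Rightarrow> 'f idt set" where
  "regular_idts ar = {e. wf_idt ar e \<and> vars (fst e) = vars (snd e)}"

abbreviation S_var :: "('f \<Rightarrow> nat) \<Rightarrow> ('f, 'a) alg \<Rightarrow> bool" where
  "S_var ar \<equiv> Mod ar (regular_idts ar)"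

definition congruence :: "('f \<Rightarrow> nat) \<Rightarrow> ('f, 'a) alg \<Rightarrow> ('a \<times> 'a) set \<Rightarrow> bool" where
  "congruence ar A \<theta> \<longleftrightarrow> equiv (car A) \<theta> \<and>
     (\<forall>f xs ys. length xs = ar f \<and> length ys = ar f \<and> list_all2 (\<lambda>x y. (x, y) \<in> \<theta>) xs ys
        \<longrightarrow> (opr A f xs, opr A f ys) \<in> \<theta>)"

definition quot_alg :: "('f, 'a) alg \<Rightarrow> ('a \<times> 'a) set \<Rightarrow> ('f, 'a set) alg" where
  "quot_alg A \<theta> = \<lparr> car = car A // \<theta>,
      opr = (\<lambda>f Xs. \<theta> `` {opr A f (map (\<lambda>X. SOME x. x \<in> X) Xs)}) \<rparr>"

definition class_alg :: "('f, 'a) alg \<Rightarrow> ('a \<times> 'a) set \<Rightarrow> 'a \<Rightarrow> ('f, 'a) alg" where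
  "class_alg A \<theta> a = \<lparr> car = \<theta> `` {a}, opr = opr A \<rparr>"

text \<open>Relative Mal'tsev product V o_W S, V = Mod(SigV), W = Mod(SigW):
  all A in W with a congruence theta such that A/theta is in S and every theta-class
  is a subalgebra lying in V.\<close>
definition relmal :: "('f \<Rightarrow> nat) \<Rightarrow> 'f idt set \<Rightarrow> 'f idt set \<Rightarrow> ('f, 'a) alg \<Rightarrow> bool" where
  "relmal ar \<Sigma>V \<Sigma>W A \<longleftrightarrow> Mod ar \<Sigma>W A \<and>
     (\<exists>\<theta>. congruence ar A \<theta> \<and> S_var ar (quot_alg A \<theta>) \<and>
          (\<forall>a\<in>car A. Mod ar \<Sigma>V (class_alg A \<theta> a)))"

text \<open>Homomorphisms, subalgebras, direct products (for the HSP characterisation of varieties).\<close>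
definition hom :: "('f \<Rightarrow> nat) \<Rightarrow> ('f, 'a) alg \<Rightarrow> ('f, 'b) alg \<Rightarrow> ('a \<Rightarrow> 'b) \<Rightarrow> bool" where
  "hom ar A B h \<longleftrightarrow> (\<forall>x\<in>car A. h x \<in> car B) \<and>
     (\<forall>f xs. length xs = ar f \<and> set xs \<subseteq> car A \<longrightarrow> h (opr A f xs) = opr B f (map h xs))"

definition subalg :: "('f \<Rightarrow> nat) \<Rightarrow> ('f, 'a) alg \<Rightarrow> ('f, 'a) alg \<Rightarrow> bool" where
  "subalg ar B A \<longleftrightarrow> is_alg ar B \<and> car B \<subseteq> car A \<and>
     (\<forall>f xs. length xs = ar f \<and> set xs \<subseteq> car B \<longrightarrow> opr B f xs = opr A f xs)"

definition prod_alg :: "'i set \<Rightarrow> ('i \<Rightarrow> ('f, 'a) alg) \<Rightarrow> ('f, 'i \<Rightarrow> 'a) alg" where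
  "prod_alg I As = \<lparr> car = (\<Pi>\<^sub>E i\<in>I. car (As i)),
      opr = (\<lambda>f xs. \<lambda>i\<in>I. opr (As i) f (map (\<lambda>x. x i) xs)) \<rparr>"

text \<open>T_2: binary terms in x_1, x_2 (here Var 0, Var 1) in which both variables occur.\<close>
definition T2 :: "('f \<Rightarrow> nat) \<Rightarrow> ('f, nat) trm set" where
  "T2 ar = {t. wf_trm ar t \<and> vars t = {0, 1}}"

end

theory Submission
  imports Defs
begin

(* Membership in V_t o_W S is witnessed by a congruence theta containing every pair of values of
   the two sides of a regular identity (this says A/theta is in S) and whose classes lie in V_t.
   As W is equational, closure under H, S and P reduces to transporting theta.  For a subalgebra
   restrict theta; for a product take theta componentwise, the class of a tuple being the product of
   the classes of its components.  For a surjective homomorphism h the image relation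
   (h x h)(theta) is reflexive, symmetric and compatible; t makes it transitive, since t(x,y) = x
   inside a class while t(x,y) theta t(y,x) by regularity.  Modulo theta, t is a semilattice join,
   so finitely many elements of a fibre of h lie below a common element w of that fibre; hence every
   assignment into a class of the image lifts, on the finitely many variables of an identity, to an
   assignment into the theta-class of w, where the identities of V_t hold. *)

section \<open>Terms and equational classes\<close>

fun subst :: "('v \<Rightarrow> ('f, 'w) trm) \<Rightarrow> ('f, 'v) trm \<Rightarrow> ('f, 'w) trm" where
  "subst \<sigma> (Var v) = \<sigma> v"
| "subst \<sigma> (App f ts) = App f (map (subst \<sigma>) ts)"

lemma eval_subst: "eval A \<rho> (subst \<sigma> u) = eval A (\<lambda>v. eval A \<rho> (\<sigma> v)) u"
  by (induction u) (auto cong: map_cong)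

lemma vars_subst: "vars (subst \<sigma> u) = (\<Union>v\<in>vars u. vars (\<sigma> v))"
  by (induction u) auto

lemma wf_trm_subst: "wf_trm ar u \<Longrightarrow> (\<And>v. wf_trm ar (\<sigma> v)) \<Longrightarrow> wf_trm ar (subst \<sigma> u)"
  by (induction u) auto

lemma finite_vars: "finite (vars u)"
  by (induction u) auto

lemma eval_vars_cong: "(\<And>v. v \<in> vars u \<Longrightarrow> \<rho> v = \<rho>' v) \<Longrightarrow> eval A \<rho> u = eval A \<rho>' u"
proof (induction u)
  case (App f ts)
  then show ?case by (auto intro!: arg_cong[where f="opr A f"] map_cong)
qed simp

lemma eval_closed:
  "is_alg ar A \<Longrightarrow> wf_trm ar u \<Longrightarrow> (\<And>v. \<rho> v \<in> car A) \<Longrightarrow> eval A \<rho> u \<in> car A"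
proof (induction u)
  case (App f ts)
  then have "set (map (eval A \<rho>) ts) \<subseteq> car A" "length (map (eval A \<rho>) ts) = ar f" by auto
  with App.prems(1) show ?case unfolding is_alg_def by auto
qed simp

lemma hom_eval:
  assumes "hom ar A B h" "is_alg ar A" "\<And>v. \<rho> v \<in> car A"
  shows "wf_trm ar u \<Longrightarrow> h (eval A \<rho> u) = eval B (h \<circ> \<rho>) u"
proof (induction u)
  case (App f ts)
  have "set (map (eval A \<rho>) ts) \<subseteq> car A" "length (map (eval A \<rho>) ts) = ar f"
    using App.prems eval_closed[of ar A _ \<rho>] assms(2,3) by auto
  with assms(1) have "h (eval A \<rho> (App f ts)) = opr B f (map h (map (eval A \<rho>) ts))"
    unfolding hom_def by simp
  also have "\<dots> = eval B (h \<circ> \<rho>) (App f ts)"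
    using App by (auto simp: o_def intro!: arg_cong[where f="opr B f"])
  finally show ?case .
qed simp

lemma subalg_eval:
  assumes "subalg ar B A" "\<And>v. \<rho> v \<in> car B"
  shows "wf_trm ar u \<Longrightarrow> eval B \<rho> u = eval A \<rho> u"
proof (induction u)
  case (App f ts)
  have "is_alg ar B" using assms(1) unfolding subalg_def by simp
  then have "set (map (eval B \<rho>) ts) \<subseteq> car B"
    using App.prems eval_closed[of ar B _ \<rho>] assms(2) by auto
  with assms(1) App.prems have "eval B \<rho> (App f ts) = opr A f (map (eval B \<rho>) ts)"
    unfolding subalg_def by auto
  also have "\<dots> = eval A \<rho> (App f ts)"
    using App by (auto intro!: arg_cong[where f="opr A f"])
  finally show ?case .
qed simp

lemma congruence_eval:
  assumes "congruence ar A \<theta>" "\<And>v. (\<rho> v, \<rho>' v) \<in> \<theta>"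
  shows "wf_trm ar u \<Longrightarrow> (eval A \<rho> u, eval A \<rho>' u) \<in> \<theta>"
proof (induction u)
  case (App f ts)
  then have "list_all2 (\<lambda>x y. (x, y) \<in> \<theta>) (map (eval A \<rho>) ts) (map (eval A \<rho>') ts)"
    by (auto simp: list.rel_map list_all2_same)
  with App.prems assms(1) show ?case unfolding congruence_def by auto
qed (simp add: assms(2))

lemma eval_class_alg: "eval (class_alg A \<theta> a) \<rho> u = eval A \<rho> u"
  by (induction u) (auto simp: class_alg_def cong: map_cong)

lemma eval_prod_alg:
  assumes "\<And>v. \<rho> v \<in> car (prod_alg I As)"
  shows "eval (prod_alg I As) \<rho> u = (\<lambda>i\<in>I. eval (As i) (\<lambda>v. \<rho> v i) u)"
proof (induction u)
  case (Var x)
  from assms[of x] show ?case by (simp add: prod_alg_def)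
next
  case (App f ts)
  have "eval (prod_alg I As) \<rho> (App f ts)
      = (\<lambda>i\<in>I. opr (As i) f (map (\<lambda>x. x i) (map (eval (prod_alg I As) \<rho>) ts)))"
    by (simp add: prod_alg_def)
  also have "\<dots> = (\<lambda>i\<in>I. eval (As i) (\<lambda>v. \<rho> v i) (App f ts))"
    using App by (intro restrict_ext) (simp cong: map_cong)
  finally show ?case .
qed

lemma surj_hom_lift_assignment:
  assumes "h ` car A = car B" "\<And>v. \<rho> v \<in> car B"
  obtains \<sigma> where "\<And>v. \<sigma> v \<in> car A" "h \<circ> \<sigma> = \<rho>"
proof -
  have "\<forall>v. \<exists>a. a \<in> car A \<and> h a = \<rho> v" using assms by (metis imageE)
  then obtain \<sigma> where "\<forall>v. \<sigma> v \<in> car A \<and> h (\<sigma> v) = \<rho> v" by metis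
  then show thesis by (intro that) auto
qed

lemma is_alg_prod_alg:
  assumes "\<And>i. i \<in> I \<Longrightarrow> is_alg ar (As i)"
  shows "is_alg ar (prod_alg I As)"
  unfolding is_alg_def
proof (intro conjI allI impI)
  show "car (prod_alg I As) \<noteq> {}"
    using assms by (auto simp: prod_alg_def is_alg_def PiE_eq_empty_iff)
  fix f xs assume xs: "length xs = ar f \<and> set xs \<subseteq> car (prod_alg I As)"
  have "opr (As i) f (map (\<lambda>x. x i) xs) \<in> car (As i)" if "i \<in> I" for i
  proof -
    have "set (map (\<lambda>x. x i) xs) \<subseteq> car (As i)" using xs that by (auto simp: prod_alg_def)
    with assms[OF that] xs show ?thesis unfolding is_alg_def by simp
  qed
  then show "opr (prod_alg I As) f xs \<in> car (prod_alg I As)" by (simp add: prod_alg_def)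
qed

lemma Mod_hom_image:
  assumes "Mod ar \<Sigma> A" "is_alg ar B" "hom ar A B h" "h ` car A = car B" "\<forall>e\<in>\<Sigma>. wf_idt ar e"
  shows "Mod ar \<Sigma> B"
  unfolding Mod_def sat_def
proof (intro conjI ballI allI impI)
  fix e and \<rho> :: "nat \<Rightarrow> _" assume e: "e \<in> \<Sigma>" and \<rho>: "\<forall>v. \<rho> v \<in> car B"
  obtain \<sigma> where \<sigma>: "\<And>v. \<sigma> v \<in> car A" and h\<sigma>: "h \<circ> \<sigma> = \<rho>"
    using surj_hom_lift_assignment[OF assms(4)] \<rho> by blast
  have A: "is_alg ar A" "sat A e" using assms(1) e unfolding Mod_def by auto
  have wf: "wf_trm ar (fst e)" "wf_trm ar (snd e)" using assms(5) e unfolding wf_idt_def by auto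
  have "eval B \<rho> (fst e) = h (eval A \<sigma> (fst e))" using hom_eval[OF assms(3) A(1) \<sigma> wf(1)] h\<sigma> by simp
  also have "\<dots> = h (eval A \<sigma> (snd e))" using A(2) \<sigma> unfolding sat_def by simp
  also have "\<dots> = eval B \<rho> (snd e)" using hom_eval[OF assms(3) A(1) \<sigma> wf(2)] h\<sigma> by simp
  finally show "eval B \<rho> (fst e) = eval B \<rho> (snd e)" .
qed (fact assms(2))

lemma Mod_subalg:
  assumes "Mod ar \<Sigma> A" "subalg ar B A" "\<forall>e\<in>\<Sigma>. wf_idt ar e"
  shows "Mod ar \<Sigma> B"
  unfolding Mod_def sat_def
proof (intro conjI ballI allI impI)
  show "is_alg ar B" using assms(2) unfolding subalg_def by simp
  fix e and \<rho> :: "nat \<Rightarrow> _" assume e: "e \<in> \<Sigma>" and \<rho>: "\<forall>v. \<rho> v \<in> car B"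
  then have "\<forall>v. \<rho> v \<in> car A" using assms(2) unfolding subalg_def by auto
  then have "eval A \<rho> (fst e) = eval A \<rho> (snd e)" using assms(1) e unfolding Mod_def sat_def by simp
  moreover have "wf_trm ar (fst e)" "wf_trm ar (snd e)"
    using assms(3) e unfolding wf_idt_def by auto
  ultimately show "eval B \<rho> (fst e) = eval B \<rho> (snd e)"
    using subalg_eval[OF assms(2), of \<rho>] \<rho> by simp
qed

lemma Mod_prod_alg:
  assumes "\<And>i. i \<in> I \<Longrightarrow> Mod ar \<Sigma> (As i)"
  shows "Mod ar \<Sigma> (prod_alg I As)"
  unfolding Mod_def sat_def
proof (intro conjI ballI allI impI)
  show "is_alg ar (prod_alg I As)" using assms by (intro is_alg_prod_alg) (simp add: Mod_def)
  fix e and \<rho> :: "nat \<Rightarrow> _" assume e: "e \<in> \<Sigma>" and \<rho>: "\<forall>v. \<rho> v \<in> car (prod_alg I As)"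
  have "eval (As i) (\<lambda>v. \<rho> v i) (fst e) = eval (As i) (\<lambda>v. \<rho> v i) (snd e)" if "i \<in> I" for i
  proof -
    have "\<forall>v. \<rho> v i \<in> car (As i)" using \<rho> that by (simp add: prod_alg_def PiE_iff)
    then show ?thesis using assms[OF that] e unfolding Mod_def sat_def by simp
  qed
  then show "eval (prod_alg I As) \<rho> (fst e) = eval (prod_alg I As) \<rho> (snd e)"
    using \<rho> by (simp add: eval_prod_alg cong: restrict_cong)
qed

section \<open>Congruences with quotient in S\<close>

lemma equiv_reflD: "equiv A r \<Longrightarrow> x \<in> A \<Longrightarrow> (x, x) \<in> r"
  unfolding equiv_def refl_on_def by blast

lemma equiv_symD: "equiv A r \<Longrightarrow> (x, y) \<in> r \<Longrightarrow> (y, x) \<in> r"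
  unfolding equiv_def by (blast dest: symD)

lemma equiv_transD: "equiv A r \<Longrightarrow> (x, y) \<in> r \<Longrightarrow> (y, z) \<in> r \<Longrightarrow> (x, z) \<in> r"
  unfolding equiv_def by (blast dest: transD)

lemma eval_quot_alg:
  assumes "congruence ar A \<theta>" "is_alg ar A" "\<And>v. \<rho> v \<in> car A"
  shows "wf_trm ar u \<Longrightarrow> eval (quot_alg A \<theta>) (\<lambda>v. \<theta> `` {\<rho> v}) u = \<theta> `` {eval A \<rho> u}"
proof (induction u)
  case (App f ts)
  have eq: "equiv (car A) \<theta>" using assms(1) unfolding congruence_def by simp
  let ?reps = "map (\<lambda>s. SOME x. x \<in> \<theta> `` {eval A \<rho> s}) ts"
  have "(eval A \<rho> s, SOME x. x \<in> \<theta> `` {eval A \<rho> s}) \<in> \<theta>" if "s \<in> set ts" for s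
  proof -
    have "eval A \<rho> s \<in> car A" using eval_closed[OF assms(2)] assms(3) App.prems that by auto
    then have "eval A \<rho> s \<in> \<theta> `` {eval A \<rho> s}" by (rule equiv_class_self[OF eq])
    then show ?thesis by (metis Image_singleton_iff someI)
  qed
  then have "list_all2 (\<lambda>x y. (x, y) \<in> \<theta>) (map (eval A \<rho>) ts) ?reps"
    by (auto simp: list.rel_map list_all2_same)
  then have "(opr A f (map (eval A \<rho>) ts), opr A f ?reps) \<in> \<theta>"
    using assms(1) App.prems unfolding congruence_def by auto
  moreover have "eval (quot_alg A \<theta>) (\<lambda>v. \<theta> `` {\<rho> v}) (App f ts) = \<theta> `` {opr A f ?reps}"
    using App by (simp add: quot_alg_def o_def cong: map_cong)
  ultimately show ?case using eq by (simp add: equiv_class_eq)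
qed simp

lemma is_alg_quot_alg:
  assumes "equiv (car A) \<theta>" "is_alg ar A"
  shows "is_alg ar (quot_alg A \<theta>)"
  unfolding is_alg_def
proof (intro conjI allI impI)
  show "car (quot_alg A \<theta>) \<noteq> {}" using assms(2) by (simp add: quot_alg_def is_alg_def)
  fix f Xs assume Xs: "length Xs = ar f \<and> set Xs \<subseteq> car (quot_alg A \<theta>)"
  have "(SOME x. x \<in> X) \<in> car A" if "X \<in> set Xs" for X
  proof -
    have X: "X \<in> car A // \<theta>" using Xs that by (auto simp: quot_alg_def)
    then have "(SOME x. x \<in> X) \<in> X"
      using assms(1) in_quotient_imp_non_empty by (metis ex_in_conv someI_ex)
    then show ?thesis using X assms(1) in_quotient_imp_subset by blast
  qed
  then have "set (map (\<lambda>X. SOME x. x \<in> X) Xs) \<subseteq> car A" by auto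
  then have "opr A f (map (\<lambda>X. SOME x. x \<in> X) Xs) \<in> car A"
    using assms(2) Xs unfolding is_alg_def by simp
  then show "opr (quot_alg A \<theta>) f Xs \<in> car (quot_alg A \<theta>)"
    by (simp add: quot_alg_def quotientI)
qed

definition identifies_regular :: "('f \<Rightarrow> nat) \<Rightarrow> ('f, 'a) alg \<Rightarrow> ('a \<times> 'a) set \<Rightarrow> bool" where
  "identifies_regular ar A \<theta> \<longleftrightarrow>
     (\<forall>e\<in>regular_idts ar. \<forall>\<rho>. (\<forall>v. \<rho> v \<in> car A) \<longrightarrow> (eval A \<rho> (fst e), eval A \<rho> (snd e)) \<in> \<theta>)"

lemma identifies_regularI:
  assumes "\<And>(u :: ('f, nat) trm) v \<rho>. wf_trm ar u \<Longrightarrow> wf_trm ar v \<Longrightarrow> vars u = vars v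
     \<Longrightarrow> (\<And>x. \<rho> x \<in> car A) \<Longrightarrow> (eval A \<rho> u, eval A \<rho> v) \<in> \<theta>"
  shows "identifies_regular ar A \<theta>"
  unfolding identifies_regular_def regular_idts_def wf_idt_def
  using assms by blast

lemma identifies_regularD:
  fixes u v :: "('f, nat) trm"
  assumes "identifies_regular ar A \<theta>" "wf_trm ar u" "wf_trm ar v" "vars u = vars v"
    "\<And>x. \<rho> x \<in> car A"
  shows "(eval A \<rho> u, eval A \<rho> v) \<in> \<theta>"
proof -
  have "(u, v) \<in> regular_idts ar" using assms(2-4) by (simp add: regular_idts_def wf_idt_def)
  with assms(1,5) show ?thesis unfolding identifies_regular_def by fastforce
qed

lemma S_var_quot_alg_iff:
  fixes ar :: "'f \<Rightarrow> nat" and A :: "('f, 'a) alg"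
  assumes "congruence ar A \<theta>" "is_alg ar A"
  shows "S_var ar (quot_alg A \<theta>) \<longleftrightarrow> identifies_regular ar A \<theta>"
proof
  have eq: "equiv (car A) \<theta>" using assms(1) unfolding congruence_def by simp
  assume S: "S_var ar (quot_alg A \<theta>)"
  show "identifies_regular ar A \<theta>"
  proof (rule identifies_regularI)
    fix u v :: "('f, nat) trm" and \<rho> :: "nat \<Rightarrow> 'a"
    assume uv: "wf_trm ar u" "wf_trm ar v" "vars u = vars v"
      and \<rho>: "\<And>x. \<rho> x \<in> car A"
    have "(u, v) \<in> regular_idts ar" using uv by (simp add: regular_idts_def wf_idt_def)
    moreover have "\<forall>x. \<theta> `` {\<rho> x} \<in> car (quot_alg A \<theta>)"
      using \<rho> by (simp add: quot_alg_def quotientI)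
    ultimately have "eval (quot_alg A \<theta>) (\<lambda>x. \<theta> `` {\<rho> x}) u
        = eval (quot_alg A \<theta>) (\<lambda>x. \<theta> `` {\<rho> x}) v"
      using S unfolding Mod_def sat_def by fastforce
    then have "\<theta> `` {eval A \<rho> u} = \<theta> `` {eval A \<rho> v}"
      using eval_quot_alg[OF assms, of \<rho>] \<rho> uv by simp
    then show "(eval A \<rho> u, eval A \<rho> v) \<in> \<theta>"
      using eq eval_closed[OF assms(2) uv(2) \<rho>] by (rule eq_equiv_class)
  qed
next
  have eq: "equiv (car A) \<theta>" using assms(1) unfolding congruence_def by simp
  assume R: "identifies_regular ar A \<theta>"
  show "S_var ar (quot_alg A \<theta>)" unfolding Mod_def sat_def
  proof (intro conjI ballI allI impI)
    show "is_alg ar (quot_alg A \<theta>)" using eq assms(2) by (rule is_alg_quot_alg)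
    fix e and \<rho> :: "nat \<Rightarrow> 'a set"
    assume e: "e \<in> regular_idts ar" and \<rho>: "\<forall>v. \<rho> v \<in> car (quot_alg A \<theta>)"
    then have "\<forall>v. \<exists>x. x \<in> car A \<and> \<rho> v = \<theta> `` {x}" by (auto simp: quot_alg_def elim!: quotientE)
    then obtain \<sigma> where \<sigma>: "\<And>v. \<sigma> v \<in> car A" and \<rho>_eq: "\<rho> = (\<lambda>v. \<theta> `` {\<sigma> v})"
      by (metis (mono_tags))
    have "(eval A \<sigma> (fst e), eval A \<sigma> (snd e)) \<in> \<theta>"
      using R e \<sigma> unfolding identifies_regular_def by blast
    moreover have "wf_trm ar (fst e)" "wf_trm ar (snd e)"
      using e by (simp_all add: regular_idts_def wf_idt_def)
    ultimately show "eval (quot_alg A \<theta>) \<rho> (fst e) = eval (quot_alg A \<theta>) \<rho> (snd e)"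
      unfolding \<rho>_eq using eval_quot_alg[OF assms, of \<sigma>] \<sigma> eq by (simp add: equiv_class_eq)
  qed
qed

definition maltsev_congruence ::
  "('f \<Rightarrow> nat) \<Rightarrow> 'f idt set \<Rightarrow> ('f, 'a) alg \<Rightarrow> ('a \<times> 'a) set \<Rightarrow> bool" where
  "maltsev_congruence ar \<Sigma>V A \<theta> \<longleftrightarrow> congruence ar A \<theta> \<and> identifies_regular ar A \<theta> \<and>
     (\<forall>a\<in>car A. Mod ar \<Sigma>V (class_alg A \<theta> a))"

lemma relmal_iff:
  "relmal ar \<Sigma>V \<Sigma>W A \<longleftrightarrow> Mod ar \<Sigma>W A \<and> (\<exists>\<theta>. maltsev_congruence ar \<Sigma>V A \<theta>)"
  unfolding relmal_def maltsev_congruence_def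
  by (metis (no_types, lifting) Mod_def S_var_quot_alg_iff)

section \<open>Subalgebras and products\<close>

lemma congruence_restrict:
  assumes "congruence ar A \<theta>" "subalg ar B A"
  shows "congruence ar B (Restr \<theta> (car B))"
  unfolding congruence_def
proof (intro conjI allI impI)
  have "car B \<subseteq> car A" using assms(2) unfolding subalg_def by simp
  with assms(1) show "equiv (car B) (Restr \<theta> (car B))"
    unfolding congruence_def equiv_def refl_on_def sym_def trans_def by blast
  fix f xs ys
  assume fxy: "length xs = ar f \<and> length ys = ar f \<and>
    list_all2 (\<lambda>x y. (x, y) \<in> Restr \<theta> (car B)) xs ys"
  then have B: "set xs \<subseteq> car B" "set ys \<subseteq> car B"
    by (auto simp: list_all2_conv_all_nth in_set_conv_nth)
  have "list_all2 (\<lambda>x y. (x, y) \<in> \<theta>) xs ys" using fxy by (auto elim: list_all2_mono)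
  then have "(opr A f xs, opr A f ys) \<in> \<theta>" using assms(1) fxy unfolding congruence_def by blast
  moreover have "opr B f xs \<in> car B" "opr B f ys \<in> car B"
    using assms(2) fxy B unfolding subalg_def is_alg_def by auto
  ultimately show "(opr B f xs, opr B f ys) \<in> Restr \<theta> (car B)"
    using assms(2) fxy B unfolding subalg_def by auto
qed

lemma identifies_regular_restrict:
  fixes ar :: "'f \<Rightarrow> nat" and A B :: "('f, 'a) alg"
  assumes "identifies_regular ar A \<theta>" "subalg ar B A"
  shows "identifies_regular ar B (Restr \<theta> (car B))"
proof (rule identifies_regularI)
  fix u v :: "('f, nat) trm" and \<rho> :: "nat \<Rightarrow> 'a"
  assume uv: "wf_trm ar u" "wf_trm ar v" "vars u = vars v" and \<rho>: "\<And>x. \<rho> x \<in> car B"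
  have B: "is_alg ar B" and \<rho>A: "\<And>x. \<rho> x \<in> car A" using assms(2) \<rho> unfolding subalg_def by auto
  have "(eval A \<rho> u, eval A \<rho> v) \<in> \<theta>" using identifies_regularD[OF assms(1) uv \<rho>A] .
  moreover have "eval B \<rho> u = eval A \<rho> u" "eval B \<rho> v = eval A \<rho> v"
    using subalg_eval[OF assms(2), of \<rho>] \<rho> uv by simp_all
  moreover have "eval B \<rho> u \<in> car B" "eval B \<rho> v \<in> car B"
    using eval_closed[OF B, of _ \<rho>] \<rho> uv by simp_all
  ultimately show "(eval B \<rho> u, eval B \<rho> v) \<in> Restr \<theta> (car B)" by simp
qed

lemma subalg_class_alg_restrict:
  assumes "congruence ar A \<theta>" "is_alg ar (class_alg A \<theta> b)" "subalg ar B A" "b \<in> car B"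
  shows "subalg ar (class_alg B (Restr \<theta> (car B)) b) (class_alg A \<theta> b)"
proof -
  have "(b, b) \<in> \<theta>" using assms(1,3,4)
    unfolding congruence_def subalg_def by (auto intro: equiv_reflD)
  moreover have "opr B f xs \<in> Restr \<theta> (car B) `` {b}"
    if xs: "length xs = ar f" "set xs \<subseteq> Restr \<theta> (car B) `` {b}" for f xs
  proof -
    have "set xs \<subseteq> car B" "set xs \<subseteq> \<theta> `` {b}" using xs(2) by auto
    then have "opr B f xs = opr A f xs" "opr B f xs \<in> car B" "opr A f xs \<in> \<theta> `` {b}"
      using assms(2,3) xs(1) unfolding subalg_def is_alg_def by (auto simp: class_alg_def)
    with assms(4) show ?thesis by auto
  qed
  moreover have "Restr \<theta> (car B) `` {b} \<subseteq> car B" by blast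
  ultimately show ?thesis
    using assms(3,4) unfolding subalg_def is_alg_def by (auto simp: class_alg_def dest: order_trans)
qed

lemma maltsev_congruence_subalg:
  assumes "maltsev_congruence ar \<Sigma>V A \<theta>" "subalg ar B A" "\<forall>e\<in>\<Sigma>V. wf_idt ar e"
  shows "maltsev_congruence ar \<Sigma>V B (Restr \<theta> (car B))"
proof -
  have "Mod ar \<Sigma>V (class_alg B (Restr \<theta> (car B)) b)" if "b \<in> car B" for b
  proof -
    have "b \<in> car A" using assms(2) that unfolding subalg_def by auto
    then have "Mod ar \<Sigma>V (class_alg A \<theta> b)" using assms(1) unfolding maltsev_congruence_def by simp
    moreover have "subalg ar (class_alg B (Restr \<theta> (car B)) b) (class_alg A \<theta> b)"
      using assms(1,2) that calculation
      by (intro subalg_class_alg_restrict) (auto simp: maltsev_congruence_def Mod_def)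
    ultimately show ?thesis using assms(3) by (rule Mod_subalg)
  qed
  with assms(1,2) show ?thesis
    by (auto simp: maltsev_congruence_def intro: congruence_restrict identifies_regular_restrict)
qed

definition prod_rel :: "'i set \<Rightarrow> ('i \<Rightarrow> ('a \<times> 'a) set) \<Rightarrow> (('i \<Rightarrow> 'a) \<times> ('i \<Rightarrow> 'a)) set" where
  "prod_rel I \<Theta> = {(x, y). x \<in> extensional I \<and> y \<in> extensional I \<and> (\<forall>i\<in>I. (x i, y i) \<in> \<Theta> i)}"

lemma equiv_prod_rel:
  assumes "\<And>i. i \<in> I \<Longrightarrow> equiv (X i) (\<Theta> i)"
  shows "equiv (\<Pi>\<^sub>E i\<in>I. X i) (prod_rel I \<Theta>)"
proof (rule equivI)
  have "\<Theta> i \<subseteq> X i \<times> X i" if "i \<in> I" for i using assms[OF that] by (rule equiv_type)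
  then show "prod_rel I \<Theta> \<subseteq> (\<Pi>\<^sub>E i\<in>I. X i) \<times> (\<Pi>\<^sub>E i\<in>I. X i)"
    by (fastforce simp: prod_rel_def PiE_iff extensional_def)
  show "refl_on (\<Pi>\<^sub>E i\<in>I. X i) (prod_rel I \<Theta>)"
    using assms by (auto simp: refl_on_def prod_rel_def PiE_iff intro: equiv_reflD)
  show "sym (prod_rel I \<Theta>)"
    using assms by (auto simp: sym_def prod_rel_def intro: equiv_symD)
  show "trans (prod_rel I \<Theta>)"
    using assms by (auto simp: trans_def prod_rel_def intro: equiv_transD)
qed

lemma congruence_prod_rel:
  assumes "\<And>i. i \<in> I \<Longrightarrow> congruence ar (As i) (\<Theta> i)"
  shows "congruence ar (prod_alg I As) (prod_rel I \<Theta>)"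
  unfolding congruence_def
proof (intro conjI allI impI)
  show "equiv (car (prod_alg I As)) (prod_rel I \<Theta>)"
    using assms unfolding congruence_def prod_alg_def by (simp add: equiv_prod_rel)
  fix f xs ys
  assume fxy: "length xs = ar f \<and> length ys = ar f \<and> list_all2 (\<lambda>x y. (x, y) \<in> prod_rel I \<Theta>) xs ys"
  have "(opr (As i) f (map (\<lambda>x. x i) xs), opr (As i) f (map (\<lambda>x. x i) ys)) \<in> \<Theta> i" if "i \<in> I" for i
  proof -
    have "list_all2 (\<lambda>x y. (x, y) \<in> \<Theta> i) (map (\<lambda>x. x i) xs) (map (\<lambda>x. x i) ys)"
      using fxy that by (auto simp: list.rel_map prod_rel_def elim: list_all2_mono)
    with assms[OF that] fxy show ?thesis unfolding congruence_def by simp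
  qed
  then show "(opr (prod_alg I As) f xs, opr (prod_alg I As) f ys) \<in> prod_rel I \<Theta>"
    by (simp add: prod_alg_def prod_rel_def)
qed

lemma identifies_regular_prod_rel:
  fixes ar :: "'f \<Rightarrow> nat" and As :: "'i \<Rightarrow> ('f, 'a) alg"
  assumes "\<And>i. i \<in> I \<Longrightarrow> identifies_regular ar (As i) (\<Theta> i)"
  shows "identifies_regular ar (prod_alg I As) (prod_rel I \<Theta>)"
proof (rule identifies_regularI)
  fix u v :: "('f, nat) trm" and \<rho> :: "nat \<Rightarrow> 'i \<Rightarrow> 'a"
  assume uv: "wf_trm ar u" "wf_trm ar v" "vars u = vars v"
    and \<rho>: "\<And>x. \<rho> x \<in> car (prod_alg I As)"
  have "(eval (As i) (\<lambda>x. \<rho> x i) u, eval (As i) (\<lambda>x. \<rho> x i) v) \<in> \<Theta> i" if "i \<in> I" for i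
    using \<rho> that by (intro identifies_regularD[OF assms[OF that] uv])
      (simp add: prod_alg_def PiE_iff)
  then show "(eval (prod_alg I As) \<rho> u, eval (prod_alg I As) \<rho> v) \<in> prod_rel I \<Theta>"
    by (simp add: eval_prod_alg[OF \<rho>] prod_rel_def)
qed

lemma class_alg_prod_rel:
  assumes "\<And>i. i \<in> I \<Longrightarrow> equiv (car (As i)) (\<Theta> i)" "a \<in> car (prod_alg I As)"
  shows "class_alg (prod_alg I As) (prod_rel I \<Theta>) a = prod_alg I (\<lambda>i. class_alg (As i) (\<Theta> i) (a i))"
proof -
  have "a \<in> extensional I" using assms(2) by (simp add: prod_alg_def PiE_iff)
  then have "prod_rel I \<Theta> `` {a} = (\<Pi>\<^sub>E i\<in>I. \<Theta> i `` {a i})"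
    by (auto simp: prod_rel_def PiE_def Pi_def)
  then show ?thesis by (simp add: class_alg_def prod_alg_def)
qed

lemma maltsev_congruence_prod_alg:
  assumes "\<And>i. i \<in> I \<Longrightarrow> maltsev_congruence ar \<Sigma>V (As i) (\<Theta> i)"
  shows "maltsev_congruence ar \<Sigma>V (prod_alg I As) (prod_rel I \<Theta>)"
proof -
  have "Mod ar \<Sigma>V (class_alg (prod_alg I As) (prod_rel I \<Theta>) a)" if "a \<in> car (prod_alg I As)" for a
  proof -
    have "a i \<in> car (As i)" if "i \<in> I" for i
      using \<open>a \<in> car (prod_alg I As)\<close> that by (simp add: prod_alg_def PiE_iff)
    then have "Mod ar \<Sigma>V (prod_alg I (\<lambda>i. class_alg (As i) (\<Theta> i) (a i)))"
      using assms unfolding maltsev_congruence_def by (intro Mod_prod_alg) simp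
    moreover have "equiv (car (As i)) (\<Theta> i)" if "i \<in> I" for i
      using assms[OF that] unfolding maltsev_congruence_def congruence_def by simp
    ultimately show ?thesis using that by (simp add: class_alg_prod_rel)
  qed
  with assms show ?thesis
    by (simp add: maltsev_congruence_def congruence_prod_rel identifies_regular_prod_rel)
qed

section \<open>Homomorphic images\<close>

lemma list_all2_image_rel_lift:
  "list_all2 (\<lambda>x y. (x, y) \<in> map_prod h h ` \<theta>) xs ys
   \<Longrightarrow> \<exists>as bs. list_all2 (\<lambda>a b. (a, b) \<in> \<theta>) as bs \<and> xs = map h as \<and> ys = map h bs"
proof (induction rule: list_all2_induct)
  case (Cons x xs y ys)
  then obtain as bs where "list_all2 (\<lambda>a b. (a, b) \<in> \<theta>) as bs" "xs = map h as" "ys = map h bs"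
    by blast
  moreover obtain a b where "(a, b) \<in> \<theta>" "x = h a" "y = h b" using Cons.hyps(1) by auto
  ultimately show ?case by (intro exI[of _ "a # as"] exI[of _ "b # bs"]) simp
qed simp

lemma congruence_image_rel:
  assumes "congruence ar A \<theta>" "hom ar A B h" "h ` car A = car B" "trans (map_prod h h ` \<theta>)"
  shows "congruence ar B (map_prod h h ` \<theta>)"
  unfolding congruence_def
proof (intro conjI allI impI)
  have eq: "equiv (car A) \<theta>" using assms(1) unfolding congruence_def by simp
  show "equiv (car B) (map_prod h h ` \<theta>)"
  proof (rule equivI)
    show "map_prod h h ` \<theta> \<subseteq> car B \<times> car B" using equiv_type[OF eq] assms(3) by auto
    show "refl_on (car B) (map_prod h h ` \<theta>)"
    proof (rule refl_onI)
      fix b assume "b \<in> car B"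
      then obtain a where "a \<in> car A" "b = h a" using assms(3) by blast
      then show "(b, b) \<in> map_prod h h ` \<theta>" using map_prod_imageI[OF equiv_reflD[OF eq]] by simp
    qed
    show "sym (map_prod h h ` \<theta>)" using equiv_symD[OF eq] by (auto simp: sym_def)
  qed (fact assms(4))
  fix f xs ys
  assume fxy: "length xs = ar f \<and> length ys = ar f \<and>
    list_all2 (\<lambda>x y. (x, y) \<in> map_prod h h ` \<theta>) xs ys"
  then obtain as bs where ab: "list_all2 (\<lambda>a b. (a, b) \<in> \<theta>) as bs" "xs = map h as" "ys = map h bs"
    using list_all2_image_rel_lift by blast
  then have "set as \<subseteq> car A" "set bs \<subseteq> car A" "length as = ar f" "length bs = ar f"
    using fxy equiv_type[OF eq] by (auto simp: list_all2_conv_all_nth in_set_conv_nth) blast+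
  then have "h (opr A f as) = opr B f xs" "h (opr A f bs) = opr B f ys"
    using assms(2) ab(2,3) unfolding hom_def by simp_all
  moreover have "(opr A f as, opr A f bs) \<in> \<theta>"
    using assms(1) ab(1) \<open>length as = ar f\<close> \<open>length bs = ar f\<close> unfolding congruence_def by simp
  ultimately show "(opr B f xs, opr B f ys) \<in> map_prod h h ` \<theta>"
    by (metis map_prod_imageI)
qed

lemma identifies_regular_image_rel:
  fixes ar :: "'f \<Rightarrow> nat" and B :: "('f, 'b) alg"
  assumes "identifies_regular ar A \<theta>" "is_alg ar A" "hom ar A B h" "h ` car A = car B"
  shows "identifies_regular ar B (map_prod h h ` \<theta>)"
proof (rule identifies_regularI)
  fix u v :: "('f, nat) trm" and \<rho> :: "nat \<Rightarrow> 'b"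
  assume uv: "wf_trm ar u" "wf_trm ar v" "vars u = vars v" and \<rho>: "\<And>x. \<rho> x \<in> car B"
  obtain \<sigma> where \<sigma>: "\<And>x. \<sigma> x \<in> car A" and h\<sigma>: "h \<circ> \<sigma> = \<rho>"
    using surj_hom_lift_assignment[OF assms(4), of \<rho>] \<rho> by blast
  have "(eval A \<sigma> u, eval A \<sigma> v) \<in> \<theta>" using identifies_regularD[OF assms(1) uv \<sigma>] .
  then have "(h (eval A \<sigma> u), h (eval A \<sigma> v)) \<in> map_prod h h ` \<theta>" by (rule map_prod_imageI)
  then show "(eval B \<rho> u, eval B \<rho> v) \<in> map_prod h h ` \<theta>"
    using hom_eval[OF assms(3,2), of \<sigma>] \<sigma> uv h\<sigma> by simp
qed

lemma congruence_class_closed: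
  assumes "congruence ar A \<theta>" "(c, opr A f (replicate (ar f) c)) \<in> \<theta>"
    "length xs = ar f" "set xs \<subseteq> \<theta> `` {c}"
  shows "opr A f xs \<in> \<theta> `` {c}"
proof -
  have "xs ! i \<in> \<theta> `` {c}" if "i < ar f" for i using assms(3,4) that by (metis nth_mem subsetD)
  then have "list_all2 (\<lambda>x y. (x, y) \<in> \<theta>) (replicate (ar f) c) xs"
    using assms(3) by (simp add: list_all2_conv_all_nth)
  then have "(opr A f (replicate (ar f) c), opr A f xs) \<in> \<theta>"
    using assms(1,3) unfolding congruence_def by simp
  with assms(1,2) show ?thesis unfolding congruence_def by (auto intro: equiv_transD)
qed

definition eval2 :: "('f, 'a) alg \<Rightarrow> ('f, nat) trm \<Rightarrow> 'a \<Rightarrow> 'a \<Rightarrow> 'a" where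
  "eval2 A t a b = eval A (\<lambda>v. if v = 0 then a else b) t"

definition subst2 :: "('f, nat) trm \<Rightarrow> ('f, 'v) trm \<Rightarrow> ('f, 'v) trm \<Rightarrow> ('f, 'v) trm" where
  "subst2 t u v = subst (\<lambda>x. if x = 0 then u else v) t"

lemma eval_subst2: "eval A \<rho> (subst2 t u v) = eval2 A t (eval A \<rho> u) (eval A \<rho> v)"
  unfolding subst2_def eval2_def eval_subst by (simp add: if_distrib)

lemma vars_subst2: "vars t = {0, 1} \<Longrightarrow> vars (subst2 t u v) = vars u \<union> vars v"
  unfolding subst2_def vars_subst by auto

lemma wf_trm_subst2: "wf_trm ar t \<Longrightarrow> wf_trm ar u \<Longrightarrow> wf_trm ar v \<Longrightarrow> wf_trm ar (subst2 t u v)"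
  unfolding subst2_def by (rule wf_trm_subst) auto

lemma eval2_closed:
  "is_alg ar A \<Longrightarrow> wf_trm ar t \<Longrightarrow> a \<in> car A \<Longrightarrow> b \<in> car A \<Longrightarrow> eval2 A t a b \<in> car A"
  unfolding eval2_def by (rule eval_closed) auto

lemma hom_eval2:
  "hom ar A B h \<Longrightarrow> is_alg ar A \<Longrightarrow> wf_trm ar t \<Longrightarrow> a \<in> car A \<Longrightarrow> b \<in> car A
   \<Longrightarrow> h (eval2 A t a b) = eval2 B t (h a) (h b)"
  unfolding eval2_def by (subst hom_eval[of ar A B h]) (auto simp: o_def if_distrib)

lemma congruence_eval2:
  "congruence ar A \<theta> \<Longrightarrow> wf_trm ar t \<Longrightarrow> (a, a') \<in> \<theta> \<Longrightarrow> (b, b') \<in> \<theta>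
   \<Longrightarrow> (eval2 A t a b, eval2 A t a' b') \<in> \<theta>"
  unfolding eval2_def by (rule congruence_eval) auto

context
  fixes ar :: "'f \<Rightarrow> nat" and \<Sigma>V :: "'f idt set" and t :: "('f, nat) trm"
  assumes t_T2: "t \<in> T2 ar" and t_left: "(t, Var 0) \<in> \<Sigma>V"
begin

lemma wf_trm_t: "wf_trm ar t" and vars_t: "vars t = {0, 1}"
  using t_T2 by (simp_all add: T2_def)

lemma eval2_eq_left:
  assumes "maltsev_congruence ar \<Sigma>V A \<theta>" "(a, b) \<in> \<theta>"
  shows "eval2 A t a b = a"
proof -
  let ?\<rho> = "\<lambda>v :: nat. if v = 0 then a else b"
  have eq: "equiv (car A) \<theta>" using assms(1) by (simp add: maltsev_congruence_def congruence_def)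
  then have a: "a \<in> car A" using assms(2) equiv_type by blast
  then have "sat (class_alg A \<theta> a) (t, Var 0)"
    using assms(1) t_left by (simp add: maltsev_congruence_def Mod_def)
  moreover have "\<forall>v. ?\<rho> v \<in> car (class_alg A \<theta> a)"
    using equiv_reflD[OF eq a] assms(2) by (simp add: class_alg_def)
  ultimately have "eval A ?\<rho> t = eval A ?\<rho> (Var 0)"
    unfolding sat_def eval_class_alg by (auto dest!: spec[of _ ?\<rho>])
  then show ?thesis by (simp add: eval2_def)
qed

lemma eval2_swap:
  assumes "identifies_regular ar A \<theta>" "a \<in> car A" "b \<in> car A"
  shows "(eval2 A t a b, eval2 A t b a) \<in> \<theta>"
  using identifies_regularD[OF assms(1),
      of "subst2 t (Var 0) (Var 1)" "subst2 t (Var 1) (Var 0)"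
      "\<lambda>v. if v = 0 then a else b"] assms(2,3)
  by (simp add: eval_subst2 vars_subst2[OF vars_t] wf_trm_subst2 wf_trm_t insert_commute)

lemma eval2_absorb:
  assumes "identifies_regular ar A \<theta>" "a \<in> car A" "b \<in> car A"
  shows "(eval2 A t a (eval2 A t a b), eval2 A t a b) \<in> \<theta>"
  using identifies_regularD[OF assms(1),
      of "subst2 t (Var 0) (subst2 t (Var 0) (Var 1))" "subst2 t (Var 0) (Var 1)"
      "\<lambda>v. if v = 0 then a else b"] assms(2,3)
  by (simp add: eval_subst2 vars_subst2[OF vars_t] wf_trm_subst2 wf_trm_t)

lemma eval2_exchange:
  assumes "identifies_regular ar A \<theta>" "a \<in> car A" "b \<in> car A" "c \<in> car A"
  shows "(eval2 A t a (eval2 A t b (eval2 A t a c)), eval2 A t b (eval2 A t a c)) \<in> \<theta>"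
  using identifies_regularD[OF assms(1),
      of "subst2 t (Var 0) (subst2 t (Var 1) (subst2 t (Var 0) (Var 2)))"
      "subst2 t (Var 1) (subst2 t (Var 0) (Var 2))"
      "\<lambda>v. if v = 0 then a else if v = 1 then b else c"] assms(2-4)
  by (simp add: eval_subst2 vars_subst2[OF vars_t] wf_trm_subst2 wf_trm_t insert_commute)

lemma trans_image_rel:
  assumes "maltsev_congruence ar \<Sigma>V A \<theta>" "is_alg ar A" "hom ar A B h"
  shows "trans (map_prod h h ` \<theta>)"
proof (rule transI)
  fix c d e assume "(c, d) \<in> map_prod h h ` \<theta>" "(d, e) \<in> map_prod h h ` \<theta>"
  then obtain a a' b b' where \<theta>: "(a, a') \<in> \<theta>" "(b, b') \<in> \<theta>"
    and hs: "c = h a" "d = h a'" "d = h b" "e = h b'" by auto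
  have cong: "congruence ar A \<theta>" and reg: "identifies_regular ar A \<theta>"
    using assms(1) by (simp_all add: maltsev_congruence_def)
  then have eq: "equiv (car A) \<theta>" by (simp add: congruence_def)
  then have A: "a \<in> car A" "a' \<in> car A" "b \<in> car A" "b' \<in> car A"
    using \<theta> equiv_type by blast+
  note hom_t = hom_eval2[OF assms(3,2) wf_trm_t]
  have "h (eval2 A t a b) = h (eval2 A t a a')" using hom_t A hs by simp
  also have "\<dots> = c" using eval2_eq_left[OF assms(1) \<theta>(1)] hs by simp
  finally have c: "h (eval2 A t a b) = c" .
  have "h (eval2 A t b' a') = h (eval2 A t b' b)" using hom_t A hs by simp
  also have "\<dots> = e" using eval2_eq_left[OF assms(1) equiv_symD[OF eq \<theta>(2)]] hs by simp
  finally have e: "h (eval2 A t b' a') = e" .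
  have "(eval2 A t a b, eval2 A t a' b') \<in> \<theta>" using congruence_eval2[OF cong wf_trm_t \<theta>] .
  moreover have "(eval2 A t a' b', eval2 A t b' a') \<in> \<theta>" using eval2_swap[OF reg A(2,4)] .
  ultimately have "(eval2 A t a b, eval2 A t b' a') \<in> \<theta>" by (rule equiv_transD[OF eq])
  then show "(c, e) \<in> map_prod h h ` \<theta>" using c e by (metis map_prod_imageI)
qed

(* In the semilattice A/theta with join t, (t(x,w), w) in theta says x <= w. *)
lemma fibre_upper_bound:
  assumes "maltsev_congruence ar \<Sigma>V A \<theta>" "is_alg ar A" "hom ar A B h" "a\<^sub>0 \<in> car A"
  shows "finite F \<Longrightarrow> F \<subseteq> car A \<Longrightarrow> \<forall>x\<in>F. h x = h a\<^sub>0
    \<Longrightarrow> \<exists>w\<in>car A. h w = h a\<^sub>0 \<and> (\<forall>x\<in>F. (eval2 A t x w, w) \<in> \<theta>)"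
proof (induction F rule: finite_induct)
  case empty
  then show ?case using assms(4) by blast
next
  case (insert y F)
  have cong: "congruence ar A \<theta>" and reg: "identifies_regular ar A \<theta>"
    using assms(1) by (simp_all add: maltsev_congruence_def)
  then have eq: "equiv (car A) \<theta>" by (simp add: congruence_def)
  obtain w where w: "w \<in> car A" "h w = h a\<^sub>0" "\<forall>x\<in>F. (eval2 A t x w, w) \<in> \<theta>"
    using insert by auto
  have y: "y \<in> car A" "h y = h a\<^sub>0" using insert.prems by auto
  let ?w = "eval2 A t y w"
  have "h ?w = h (eval2 A t a\<^sub>0 a\<^sub>0)" using hom_eval2[OF assms(3,2) wf_trm_t] w y assms(4) by simp
  also have "\<dots> = h a\<^sub>0" using eval2_eq_left[OF assms(1) equiv_reflD[OF eq assms(4)]] by simp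
  finally have h_w: "h ?w = h a\<^sub>0" .
  have "(eval2 A t x ?w, ?w) \<in> \<theta>" if "x \<in> F" for x
  proof -
    have x: "x \<in> car A" "(eval2 A t x w, w) \<in> \<theta>" using insert.prems w(3) that by auto
    let ?z = "eval2 A t y (eval2 A t x w)"
    have "(eval2 A t x ?w, eval2 A t x ?z) \<in> \<theta>"
      using x y w equiv_reflD[OF eq] equiv_symD[OF eq]
      by (intro congruence_eval2[OF cong wf_trm_t]) auto
    moreover have "(eval2 A t x ?z, ?z) \<in> \<theta>" using eval2_exchange[OF reg x(1) y(1) w(1)] .
    moreover have "(?z, ?w) \<in> \<theta>"
      using x y equiv_reflD[OF eq] by (intro congruence_eval2[OF cong wf_trm_t]) auto
    ultimately show ?thesis by (blast intro: equiv_transD[OF eq])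
  qed
  moreover have "(eval2 A t y ?w, ?w) \<in> \<theta>" using eval2_absorb[OF reg y(1) w(1)] .
  ultimately show ?case using eval2_closed[OF assms(2) wf_trm_t y(1) w(1)] h_w by blast
qed

lemma image_class_assignment_lift:
  fixes \<rho> :: "nat \<Rightarrow> 'b"
  assumes "maltsev_congruence ar \<Sigma>V A \<theta>" "is_alg ar A" "hom ar A B h" "finite X"
    "\<forall>v. \<rho> v \<in> (map_prod h h ` \<theta>) `` {c}"
  obtains w \<sigma> where "w \<in> car A" "\<forall>v. \<sigma> v \<in> \<theta> `` {w}" "\<forall>v\<in>X. h (\<sigma> v) = \<rho> v"
proof -
  have cong: "congruence ar A \<theta>" using assms(1) by (simp add: maltsev_congruence_def)
  then have eq: "equiv (car A) \<theta>" by (simp add: congruence_def)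
  have "\<exists>p. p \<in> \<theta> \<and> h (fst p) = c \<and> h (snd p) = \<rho> v" for v
  proof -
    obtain a b where "(a, b) \<in> \<theta>" "c = h a" "\<rho> v = h b" using assms(5) by blast
    then show ?thesis by (intro exI[of _ "(a, b)"]) simp
  qed
  then obtain p where p: "\<And>v. (fst (p v), snd (p v)) \<in> \<theta>" "\<And>v. h (fst (p v)) = c"
    "\<And>v. h (snd (p v)) = \<rho> v"
    by (metis prod.collapse)
  have car_p: "fst (p v) \<in> car A" "snd (p v) \<in> car A" for v
    using p(1)[of v] equiv_type[OF eq] by auto
  obtain w where w: "w \<in> car A" "\<forall>x\<in>fst ` p ` X. (eval2 A t x w, w) \<in> \<theta>" "h w = c"
    using fibre_upper_bound[OF assms(1-3) car_p(1)[of 0], of "fst ` p ` X"] assms(4) car_p p(2)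
    by auto
  define \<sigma> where "\<sigma> v = (if v \<in> X then eval2 A t (snd (p v)) w else w)" for v
  have "\<sigma> v \<in> \<theta> `` {w}" for v
  proof (cases "v \<in> X")
    case True
    have "(eval2 A t (snd (p v)) w, eval2 A t (fst (p v)) w) \<in> \<theta>"
      using equiv_symD[OF eq p(1)] equiv_reflD[OF eq w(1)]
      by (intro congruence_eval2[OF cong wf_trm_t]) auto
    with True w(2) have "(\<sigma> v, w) \<in> \<theta>" unfolding \<sigma>_def by (auto intro: equiv_transD[OF eq])
    then show ?thesis by (auto intro: equiv_symD[OF eq])
  qed (simp add: \<sigma>_def equiv_reflD[OF eq w(1)])
  moreover have "h (\<sigma> v) = \<rho> v" if "v \<in> X" for v
  proof -
    have "h (\<sigma> v) = h (eval2 A t (snd (p v)) (fst (p v)))"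
      using that hom_eval2[OF assms(3,2) wf_trm_t] car_p w(1,3) p(2) unfolding \<sigma>_def by simp
    also have "\<dots> = \<rho> v" using eval2_eq_left[OF assms(1) equiv_symD[OF eq p(1)]] p(3) by simp
    finally show ?thesis .
  qed
  ultimately show thesis using that w(1) by blast
qed

lemma is_alg_class_alg_image:
  assumes "maltsev_congruence ar \<Sigma>V A \<theta>" "hom ar A B h" "h ` car A = car B"
    "congruence ar B (map_prod h h ` \<theta>)" "c \<in> car B"
  shows "is_alg ar (class_alg B (map_prod h h ` \<theta>) c)"
  unfolding is_alg_def
proof (intro conjI allI impI)
  have eqB: "equiv (car B) (map_prod h h ` \<theta>)" using assms(4) by (simp add: congruence_def)
  then show "car (class_alg B (map_prod h h ` \<theta>) c) \<noteq> {}"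
    using equiv_reflD[OF eqB assms(5)] by (auto simp: class_alg_def)
  from assms(3,5) have "c \<in> h ` car A" by simp
  then obtain a where a: "a \<in> car A" "h a = c" by blast
  have eq: "equiv (car A) \<theta>" using assms(1) by (simp add: maltsev_congruence_def congruence_def)
  fix f xs assume xs: "length xs = ar f \<and> set xs \<subseteq> car (class_alg B (map_prod h h ` \<theta>) c)"
  have "is_alg ar (class_alg A \<theta> a)" using assms(1) a(1)
    by (simp add: maltsev_congruence_def Mod_def)
  moreover have "set (replicate (ar f) a) \<subseteq> car (class_alg A \<theta> a)"
    using equiv_reflD[OF eq a(1)] by (auto simp: class_alg_def)
  ultimately have "(a, opr A f (replicate (ar f) a)) \<in> \<theta>"
    unfolding is_alg_def by (simp add: class_alg_def)
  moreover have "set (replicate (ar f) a) \<subseteq> car A" using a(1) by auto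
  then have "h (opr A f (replicate (ar f) a)) = opr B f (replicate (ar f) c)"
    using assms(2) a(2) unfolding hom_def by auto
  ultimately have "(c, opr B f (replicate (ar f) c)) \<in> map_prod h h ` \<theta>"
    using a(2) by (metis map_prod_imageI)
  with assms(4) xs have "opr B f xs \<in> (map_prod h h ` \<theta>) `` {c}"
    by (intro congruence_class_closed) (simp_all add: class_alg_def)
  then show "opr (class_alg B (map_prod h h ` \<theta>) c) f xs \<in> car (class_alg B (map_prod h h ` \<theta>) c)"
    by (simp add: class_alg_def)
qed

lemma Mod_class_alg_image:
  assumes "maltsev_congruence ar \<Sigma>V A \<theta>" "is_alg ar A" "hom ar A B h" "h ` car A = car B"
    "congruence ar B (map_prod h h ` \<theta>)" "\<forall>e\<in>\<Sigma>V. wf_idt ar e" "c \<in> car B"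
  shows "Mod ar \<Sigma>V (class_alg B (map_prod h h ` \<theta>) c)"
  unfolding Mod_def sat_def eval_class_alg
proof (intro conjI ballI allI impI)
  show "is_alg ar (class_alg B (map_prod h h ` \<theta>) c)"
    using assms(1,3,4,5,7) by (rule is_alg_class_alg_image)
  fix e and \<rho> :: "nat \<Rightarrow> _" assume e: "e \<in> \<Sigma>V"
    and \<rho>: "\<forall>v. \<rho> v \<in> car (class_alg B (map_prod h h ` \<theta>) c)"
  let ?X = "vars (fst e) \<union> vars (snd e)"
  obtain w \<sigma> where w: "w \<in> car A" and \<sigma>: "\<forall>v. \<sigma> v \<in> \<theta> `` {w}" and h\<sigma>: "\<forall>v\<in>?X. h (\<sigma> v) = \<rho> v"
    using image_class_assignment_lift[OF assms(1-3), of ?X \<rho> c] \<rho>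
    by (auto simp: class_alg_def finite_vars)
  have eq: "equiv (car A) \<theta>" using assms(1) by (simp add: maltsev_congruence_def congruence_def)
  have \<sigma>A: "\<And>v. \<sigma> v \<in> car A" using \<sigma> equiv_type[OF eq] by blast
  have wf: "wf_trm ar (fst e)" "wf_trm ar (snd e)" using assms(6) e by (simp_all add: wf_idt_def)
  have "sat (class_alg A \<theta> w) e" using assms(1) w e by (simp add: maltsev_congruence_def Mod_def)
  then have "eval A \<sigma> (fst e) = eval A \<sigma> (snd e)"
    using \<sigma> unfolding sat_def eval_class_alg by (simp add: class_alg_def)
  have "eval B \<rho> (fst e) = eval B (h \<circ> \<sigma>) (fst e)" using h\<sigma> by (intro eval_vars_cong) auto
  also have "\<dots> = h (eval A \<sigma> (fst e))" using hom_eval[OF assms(3,2) \<sigma>A wf(1)] by simp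
  also have "\<dots> = h (eval A \<sigma> (snd e))" using \<open>eval A \<sigma> (fst e) = eval A \<sigma> (snd e)\<close> by simp
  also have "\<dots> = eval B (h \<circ> \<sigma>) (snd e)" using hom_eval[OF assms(3,2) \<sigma>A wf(2)] by simp
  also have "\<dots> = eval B \<rho> (snd e)" using h\<sigma> by (intro eval_vars_cong) auto
  finally show "eval B \<rho> (fst e) = eval B \<rho> (snd e)" .
qed

lemma maltsev_congruence_hom_image:
  assumes "maltsev_congruence ar \<Sigma>V A \<theta>" "is_alg ar A" "hom ar A B h" "h ` car A = car B"
    "\<forall>e\<in>\<Sigma>V. wf_idt ar e"
  shows "maltsev_congruence ar \<Sigma>V B (map_prod h h ` \<theta>)"
proof -
  have "congruence ar B (map_prod h h ` \<theta>)"
    using assms(1) trans_image_rel[OF assms(1-3)] assms(3,4)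
    by (intro congruence_image_rel) (simp_all add: maltsev_congruence_def)
  moreover have "identifies_regular ar B (map_prod h h ` \<theta>)"
    using assms(1) identifies_regular_image_rel[OF _ assms(2-4)]
    by (simp add: maltsev_congruence_def)
  ultimately show ?thesis
    using Mod_class_alg_image[OF assms(1-4) _ assms(5)] by (simp add: maltsev_congruence_def)
qed

end

theorem corollary5p5:
  fixes ar :: "'f \<Rightarrow> nat" and \<Sigma>V \<Sigma>W :: "'f idt set" and t :: "('f, nat) trm"
  assumes "plural ar"
    and "\<forall>e\<in>\<Sigma>V. wf_idt ar e" and "\<forall>e\<in>\<Sigma>W. wf_idt ar e"
    and "t \<in> T2 ar" and "(t, Var 0) \<in> \<Sigma>V"
  shows "(\<forall>(A :: ('f, 'a) alg) (B :: ('f, 'b) alg) h.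
            relmal ar \<Sigma>V \<Sigma>W A \<and> is_alg ar B \<and> hom ar A B h \<and> h ` car A = car B
              \<longrightarrow> relmal ar \<Sigma>V \<Sigma>W B)
       \<and> (\<forall>(A :: ('f, 'c) alg) B.
            relmal ar \<Sigma>V \<Sigma>W A \<and> subalg ar B A \<longrightarrow> relmal ar \<Sigma>V \<Sigma>W B)
       \<and> (\<forall>(I :: 'i set) (As :: 'i \<Rightarrow> ('f, 'd) alg).
            (\<forall>i\<in>I. relmal ar \<Sigma>V \<Sigma>W (As i)) \<longrightarrow> relmal ar \<Sigma>V \<Sigma>W (prod_alg I As))"
proof (intro conjI allI impI)
  fix A :: "('f, 'a) alg" and B :: "('f, 'b) alg" and h
  assume "relmal ar \<Sigma>V \<Sigma>W A \<and> is_alg ar B \<and> hom ar A B h \<and> h ` car A = car B"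
  then obtain \<theta> where A: "Mod ar \<Sigma>W A" "maltsev_congruence ar \<Sigma>V A \<theta>"
    and B: "is_alg ar B" "hom ar A B h" "h ` car A = car B"
    unfolding relmal_iff by blast
  have "is_alg ar A" using A(1) by (simp add: Mod_def)
  then show "relmal ar \<Sigma>V \<Sigma>W B"
    using Mod_hom_image[OF A(1) B assms(3)]
      maltsev_congruence_hom_image[OF assms(4,5) A(2) _ B(2,3) assms(2)]
    unfolding relmal_iff by blast
next
  fix A :: "('f, 'c) alg" and B
  assume "relmal ar \<Sigma>V \<Sigma>W A \<and> subalg ar B A"
  then show "relmal ar \<Sigma>V \<Sigma>W B"
    unfolding relmal_iff using Mod_subalg maltsev_congruence_subalg assms(2,3) by blast
next
  fix I :: "'i set" and As :: "'i \<Rightarrow> ('f, 'd) alg"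
  assume "\<forall>i\<in>I. relmal ar \<Sigma>V \<Sigma>W (As i)"
  then obtain \<Theta> where "\<And>i. i \<in> I \<Longrightarrow> Mod ar \<Sigma>W (As i) \<and> maltsev_congruence ar \<Sigma>V (As i) (\<Theta> i)"
    unfolding relmal_iff by metis
  then show "relmal ar \<Sigma>V \<Sigma>W (prod_alg I As)"
    unfolding relmal_iff by (blast intro: Mod_prod_alg maltsev_congruence_prod_alg)
qed

end
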